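(* Let $p>1$ and let $G$ be a finite simple connected graph on $n\geq 4$ vertices with nonempty boundary $B(G)$. Then $$\lambda_{1,p}(G)\geq \lambda_{1,p}(T_{n,3}),$$ and equality holds if and only if $G$ is isomorphic to $T_{n,3}$.
   Context: For a finite simple connected graph $G$, its boundary is $B(G)=\{x\in V(G): \deg(x)=1\}$ (the pendant vertices) and its interior is $\Omega(G)=V(G)\setminus B(G)$; "graph with boundary" means $B(G)\neq\emptyset$. For $p\ge 1$, let $C_B(G)=\{f\in\mathbb{R}^{V(G)}: f|_{B(G)}\equiv 0\}$ and define the first $p$-Dirichlet eigenvalue $$\lambda_{1,p}(G)=\min_{f\in C_B(G)\setminus\{0\}}\frac{\sum_{\{x,y\}\in E(G)}|f(x)-f(y)|^p}{\sum_{x\in V(G)}|f(x)|^p}.$$ (For $p>1$ this equals the smallest $\lambda$ such that $\sum_{y\sim x}|f(x)-f(y)|^{p-2}(f(x)-f(y))=\lambda|f(x)|^{p-2}f(x)$ for all $x\in\Omega(G)$ has a nonzero solution $f\in C_B(G)$.) For $n>i\ge 3$, the tadpole graph $T_{n,i}$ is the graph on vertices $t_1,\dots,t_n$ with edges $t_n\sim t_{n-1}\sim\cdots\sim t_i\sim t_{i-1}\sim\cdots\sim t_2\sim t_1\sim t_i$, i.e. a cycle $t_i,t_{i-1},\dots,t_1$ of length $i$ (the head) with a path $t_n,\dots,t_i$ (the tail) attached at the neck vertex $t_i$; its only boundary vertex is $t_n$. *)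

theory Defs
  imports Complex_Main
begin

definition simple_graph :: "'a set \<Rightarrow> ('a \<Rightarrow> 'a \<Rightarrow> bool) \<Rightarrow> bool" where
  "simple_graph V E \<longleftrightarrow> finite V \<and>
     (\<forall>x y. E x y \<longrightarrow> x \<in> V \<and> y \<in> V) \<and>
     (\<forall>x y. E x y \<longrightarrow> E y x) \<and> (\<forall>x. \<not> E x x)"

definition connected_graph :: "'a set \<Rightarrow> ('a \<Rightarrow> 'a \<Rightarrow> bool) \<Rightarrow> bool" where
  "connected_graph V E \<longleftrightarrow> (\<forall>x\<in>V. \<forall>y\<in>V. E\<^sup>*\<^sup>* x y)"

definition degree :: "'a set \<Rightarrow> ('a \<Rightarrow> 'a \<Rightarrow> bool) \<Rightarrow> 'a \<Rightarrow> nat" where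
  "degree V E x = card {y \<in> V. E x y}"

definition boundary :: "'a set \<Rightarrow> ('a \<Rightarrow> 'a \<Rightarrow> bool) \<Rightarrow> 'a set" where
  "boundary V E = {x \<in> V. degree V E x = 1}"

definition p_energy :: "'a set \<Rightarrow> ('a \<Rightarrow> 'a \<Rightarrow> bool) \<Rightarrow> real \<Rightarrow> ('a \<Rightarrow> real) \<Rightarrow> real" where
  "p_energy V E p f = (\<Sum>x\<in>V. \<Sum>y\<in>V. if E x y then \<bar>f x - f y\<bar> powr p else 0) / 2"

definition p_norm_pow :: "'a set \<Rightarrow> real \<Rightarrow> ('a \<Rightarrow> real) \<Rightarrow> real" where
  "p_norm_pow V p f = (\<Sum>x\<in>V. \<bar>f x\<bar> powr p)"

text \<open>First p-Dirichlet eigenvalue: the minimum (= infimum, it is attained) of the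
  Rayleigh quotient over nonzero functions on V vanishing on the boundary.\<close>
definition lambda1p :: "'a set \<Rightarrow> ('a \<Rightarrow> 'a \<Rightarrow> bool) \<Rightarrow> real \<Rightarrow> real" where
  "lambda1p V E p = Inf {p_energy V E p f / p_norm_pow V p f | f.
      (\<forall>x\<in>boundary V E. f x = 0) \<and> (\<exists>x\<in>V. f x \<noteq> 0)}"

definition tadpole_adj :: "nat \<Rightarrow> nat \<Rightarrow> nat \<Rightarrow> nat \<Rightarrow> bool" where
  "tadpole_adj n i x y \<longleftrightarrow> x \<in> {1..n} \<and> y \<in> {1..n} \<and>
     (y = x + 1 \<or> x = y + 1 \<or> (x = 1 \<and> y = i) \<or> (x = i \<and> y = 1))"

definition tadpole_vertices :: "nat \<Rightarrow> nat set" where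
  "tadpole_vertices n = {1..n}"

definition graph_iso :: "'a set \<Rightarrow> ('a \<Rightarrow> 'a \<Rightarrow> bool) \<Rightarrow> 'b set \<Rightarrow> ('b \<Rightarrow> 'b \<Rightarrow> bool) \<Rightarrow> bool" where
  "graph_iso V E W F \<longleftrightarrow> (\<exists>h. bij_betw h V W \<and> (\<forall>x\<in>V. \<forall>y\<in>V. E x y \<longleftrightarrow> F (h x) (h y)))"

end

theory Submission
  imports Defs
begin

text \<open>Passing to \<open>\<bar>f\<bar>\<close> does not increase the Rayleigh
  quotient, so let \<open>f \<ge> 0\<close> and number the vertices \<open>1, \<dots>, n\<close> so that \<open>f\<close> is nonincreasing;
  then \<open>f n = 0\<close>. An edge \<open>(i, j)\<close> with \<open>i < j\<close> costs \<open>(f i - f j)\<^sup>p\<close>, which by superadditivity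
  of \<open>t\<^sup>p\<close> is at least the sum of \<open>(f k - f (k + 1))\<^sup>p\<close> over the unit steps \<open>i \<le> k < j\<close> it
  spans. Connectivity makes every step spanned by some edge, and as the vertices 1 and 2 are
  interior the first two steps are spanned twice (unless \<open>f 2 = 0\<close>). Summing up, the energy
  of \<open>f\<close> on \<open>G\<close> is at least its energy on the tadpole \<open>T\<^sub>n\<^sub>,\<^sub>3\<close> labeled along the same
  numbering, whence \<open>\<lambda>\<^sub>1\<^sub>,\<^sub>p(T\<^sub>n\<^sub>,\<^sub>3) \<le> \<lambda>\<^sub>1\<^sub>,\<^sub>p(G)\<close>.

  In case of equality the sorted minimizer of \<open>G\<close> also minimizes on \<open>T\<^sub>n\<^sub>,\<^sub>3\<close>. The
  Euler--Lagrange equation makes it strictly decreasing along the tail, and then strict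
  superadditivity forces every edge of \<open>G\<close> to be a unit step or the chord \<open>(1, 3)\<close>.\<close>

lemma powr_superadditive:
  fixes x y p :: real
  assumes "0 \<le> x" "0 \<le> y" "1 \<le> p"
  shows "x powr p + y powr p \<le> (x + y) powr p"
proof -
  have "x powr p + y powr p = x * x powr (p - 1) + y * y powr (p - 1)"
    using assms by (simp add: powr_mult_base)
  also have "\<dots> \<le> x * (x + y) powr (p - 1) + y * (x + y) powr (p - 1)"
    using assms by (intro add_mono mult_left_mono powr_mono2) auto
  also have "\<dots> = (x + y) powr p"
    using assms by (simp add: powr_mult_base flip: distrib_right)
  finally show ?thesis .
qed

lemma powr_superadditive_strict:
  fixes x y p :: real
  assumes "0 < x" "0 < y" "1 < p"
  shows "x powr p + y powr p < (x + y) powr p"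
proof -
  have "x powr p + y powr p = x * x powr (p - 1) + y * y powr (p - 1)"
    using assms by (simp add: powr_mult_base)
  also have "\<dots> < x * (x + y) powr (p - 1) + y * (x + y) powr (p - 1)"
    using assms by (intro add_strict_mono mult_strict_left_mono powr_less_mono2) auto
  also have "\<dots> = (x + y) powr p"
    using assms by (simp add: powr_mult_base flip: distrib_right)
  finally show ?thesis .
qed

definition admissible :: "'a set \<Rightarrow> ('a \<Rightarrow> 'a \<Rightarrow> bool) \<Rightarrow> ('a \<Rightarrow> real) \<Rightarrow> bool" where
  "admissible V E f \<longleftrightarrow> (\<forall>x\<in>boundary V E. f x = 0) \<and> (\<exists>x\<in>V. f x \<noteq> 0)"

definition rayleigh :: "'a set \<Rightarrow> ('a \<Rightarrow> 'a \<Rightarrow> bool) \<Rightarrow> real \<Rightarrow> ('a \<Rightarrow> real) \<Rightarrow> real" where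
  "rayleigh V E p f = p_energy V E p f / p_norm_pow V p f"

lemma lambda1p_eq_Inf_rayleigh: "lambda1p V E p = Inf {rayleigh V E p f | f. admissible V E f}"
  unfolding lambda1p_def rayleigh_def admissible_def by simp

lemma p_energy_nonneg: "0 \<le> p_energy V E p f"
  unfolding p_energy_def by (intro divide_nonneg_pos sum_nonneg) auto

lemma p_norm_pow_eq_0_iff: "finite V \<Longrightarrow> p_norm_pow V p f = 0 \<longleftrightarrow> (\<forall>x\<in>V. f x = 0)"
  unfolding p_norm_pow_def by (simp add: sum_nonneg_eq_0_iff)

lemma p_norm_pow_pos: "finite V \<Longrightarrow> admissible V E f \<Longrightarrow> 0 < p_norm_pow V p f"
  unfolding p_norm_pow_def admissible_def by (auto intro: sum_pos2)

lemma rayleigh_nonneg: "0 \<le> rayleigh V E p f"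
  unfolding rayleigh_def p_norm_pow_def by (intro divide_nonneg_nonneg p_energy_nonneg sum_nonneg) auto

lemma lambda1p_le_rayleigh:
  assumes "admissible V E f"
  shows "lambda1p V E p \<le> rayleigh V E p f"
  unfolding lambda1p_eq_Inf_rayleigh
  using assms by (intro cInf_lower bdd_belowI[of _ 0]) (auto intro: rayleigh_nonneg)

lemma lambda1p_greatest:
  assumes "admissible V E f\<^sub>0" "\<And>f. admissible V E f \<Longrightarrow> c \<le> rayleigh V E p f"
  shows "c \<le> lambda1p V E p"
  unfolding lambda1p_eq_Inf_rayleigh using assms by (intro cInf_greatest) auto

lemma admissible_abs: "admissible V E f \<Longrightarrow> admissible V E (\<lambda>x. \<bar>f x\<bar>)"
  unfolding admissible_def by auto

lemma rayleigh_abs_le: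
  assumes "finite V" "admissible V E f" "0 \<le> p"
  shows "rayleigh V E p (\<lambda>x. \<bar>f x\<bar>) \<le> rayleigh V E p f"
proof -
  have energy: "p_energy V E p (\<lambda>x. \<bar>f x\<bar>) \<le> p_energy V E p f"
    unfolding p_energy_def
    using assms(3) by (intro divide_right_mono sum_mono) (auto intro: powr_mono2 abs_triangle_ineq3)
  have norm: "p_norm_pow V p (\<lambda>x. \<bar>f x\<bar>) = p_norm_pow V p f"
    unfolding p_norm_pow_def by simp
  show ?thesis
    unfolding rayleigh_def norm
    using energy p_norm_pow_pos[OF assms(1,2), of p] by (intro divide_right_mono) auto
qed

lemma admissible_normalized:
  assumes "finite V" "admissible V E f" "0 < p"
  obtains g where "admissible V E g" "p_norm_pow V p g = 1" "rayleigh V E p g = rayleigh V E p f"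
proof
  define N where "N = p_norm_pow V p f"
  have N: "0 < N"
    unfolding N_def using p_norm_pow_pos[OF assms(1,2)] .
  define c where "c = N powr (- 1 / p)"
  have "c powr p = N powr (- 1 / p * p)"
    unfolding c_def by (simp add: powr_powr)
  then have c: "0 < c" "c powr p = 1 / N"
    unfolding c_def using N assms(3) by (simp_all add: powr_minus_divide)
  have scale: "\<bar>c * u - c * v\<bar> powr p = c powr p * \<bar>u - v\<bar> powr p" for u v
    using c by (simp add: abs_mult powr_mult flip: right_diff_distrib)
  have energy: "p_energy V E p (\<lambda>x. c * f x) = c powr p * p_energy V E p f"
    unfolding p_energy_def by (simp add: scale sum_distrib_left if_distrib cong: if_cong)
  have norm: "p_norm_pow V p (\<lambda>x. c * f x) = c powr p * N"
    using scale[of _ 0] unfolding p_norm_pow_def N_def by (simp add: sum_distrib_left)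
  show "admissible V E (\<lambda>x. c * f x)"
    using assms(2) c unfolding admissible_def by auto
  show "p_norm_pow V p (\<lambda>x. c * f x) = 1"
    unfolding norm c using N by simp
  show "rayleigh V E p (\<lambda>x. c * f x) = rayleigh V E p f"
    unfolding rayleigh_def energy norm using c N by (simp add: N_def)
qed

lemma normalized_minimizing_sequence:
  assumes "finite V" "0 < p" "admissible V E f\<^sub>0"
  obtains F where "\<And>m. admissible V E (F m)" "\<And>m. p_norm_pow V p (F m) = 1"
    "\<And>m. rayleigh V E p (F m) < lambda1p V E p + 1 / Suc m"
proof -
  have "\<exists>g. admissible V E g \<and> p_norm_pow V p g = 1 \<and> rayleigh V E p g < lambda1p V E p + 1 / Suc m"
    for m
  proof -
    have "Inf {rayleigh V E p f | f. admissible V E f} < lambda1p V E p + 1 / Suc m"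
      unfolding lambda1p_eq_Inf_rayleigh by simp
    then obtain f where "admissible V E f" "rayleigh V E p f < lambda1p V E p + 1 / Suc m"
      using cInf_lessD[of "{rayleigh V E p f | f. admissible V E f}"] assms(3) by blast
    then show ?thesis
      using admissible_normalized[OF assms(1) _ assms(2)] by metis
  qed
  then show ?thesis
    using that by metis
qed

lemma finite_bounded_convergent_subseq:
  fixes F :: "nat \<Rightarrow> 'a \<Rightarrow> real"
  assumes "finite S" "\<And>m x. x \<in> S \<Longrightarrow> \<bar>F m x\<bar> \<le> B"
  shows "\<exists>r. strict_mono r \<and> (\<forall>x\<in>S. convergent (\<lambda>m. F (r m) x))"
  using assms
proof (induction S rule: finite_induct)
  case empty
  show ?case
    by (rule exI[of _ id]) (simp add: strict_mono_def)
next
  case (insert x S)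
  have "\<bar>F m y\<bar> \<le> B" if "y \<in> S" for m y
    using insert.prems that by blast
  then obtain r where r: "strict_mono r" "\<forall>y\<in>S. convergent (\<lambda>m. F (r m) y)"
    using insert.IH by blast
  obtain s where s: "strict_mono s" "monoseq (\<lambda>m. F (r (s m)) x)"
    using seq_monosub[of "\<lambda>m. F (r m) x"] by blast
  have "Bseq (\<lambda>m. F (r (s m)) x)"
    using insert.prems by (intro BseqI'[of _ B]) auto
  then have "convergent (\<lambda>m. F (r (s m)) x)"
    using Bseq_monoseq_convergent s(2) by blast
  moreover have "convergent (\<lambda>m. F (r (s m)) y)" if "y \<in> S" for y
    using convergent_subseq_convergent[OF r(2)[rule_format, OF that] s(1)] by (simp add: o_def)
  ultimately show ?case
    by (intro exI[of _ "r \<circ> s"]) (use strict_mono_o[OF r(1) s(1)] in \<open>auto simp: o_def\<close>)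
qed

lemma tendsto_abs_powr:
  fixes u :: "'b \<Rightarrow> real"
  assumes "(u \<longlongrightarrow> l) L" "0 < p"
  shows "((\<lambda>m. \<bar>u m\<bar> powr p) \<longlongrightarrow> \<bar>l\<bar> powr p) L"
  using tendsto_powr'[OF tendsto_rabs[OF assms(1)] tendsto_const[of p]] assms(2) by simp

lemma tendsto_p_energy:
  assumes "\<And>x. x \<in> V \<Longrightarrow> ((\<lambda>m. F m x) \<longlongrightarrow> g x) L" "0 < p"
  shows "((\<lambda>m. p_energy V E p (F m)) \<longlongrightarrow> p_energy V E p g) L"
  unfolding p_energy_def
proof (intro tendsto_divide tendsto_const tendsto_sum)
  fix x y assume "x \<in> V" "y \<in> V"
  then show "((\<lambda>m. if E x y then \<bar>F m x - F m y\<bar> powr p else 0) \<longlongrightarrow>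
      (if E x y then \<bar>g x - g y\<bar> powr p else 0)) L"
    using assms by (auto intro!: tendsto_abs_powr tendsto_diff)
qed simp

lemma tendsto_p_norm_pow:
  assumes "\<And>x. x \<in> V \<Longrightarrow> ((\<lambda>m. F m x) \<longlongrightarrow> g x) L" "0 < p"
  shows "((\<lambda>m. p_norm_pow V p (F m)) \<longlongrightarrow> p_norm_pow V p g) L"
  unfolding p_norm_pow_def using assms by (intro tendsto_sum tendsto_abs_powr)

text \<open>Normalized to \<open>p\<close>-norm 1, a minimizing sequence is bounded; a pointwise convergent
  subsequence has a limit of norm 1 that still vanishes on the boundary.\<close>

lemma lambda1p_attained:
  assumes "finite V" "0 < p" "admissible V E f\<^sub>0"
  obtains f where "admissible V E f" "rayleigh V E p f = lambda1p V E p"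
proof -
  obtain F where F: "\<And>m. admissible V E (F m)" "\<And>m. p_norm_pow V p (F m) = 1"
      "\<And>m. rayleigh V E p (F m) < lambda1p V E p + 1 / Suc m"
    using normalized_minimizing_sequence[OF assms] by blast
  have "\<bar>F m x\<bar> \<le> 1" if "x \<in> V" for m x
  proof -
    have "\<bar>F m x\<bar> powr p \<le> p_norm_pow V p (F m)"
      unfolding p_norm_pow_def using assms(1) that by (intro member_le_sum) auto
    moreover have "1 < \<bar>F m x\<bar> powr p" if "1 < \<bar>F m x\<bar>"
      using that assms(2) by simp
    ultimately show ?thesis
      using F(2) by force
  qed
  then obtain r where r: "strict_mono r" "\<forall>x\<in>V. convergent (\<lambda>m. F (r m) x)"
    using finite_bounded_convergent_subseq[OF assms(1)] by blast
  define g where "g x = lim (\<lambda>m. F (r m) x)" for x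
  have lim: "(\<lambda>m. F (r m) x) \<longlonglongrightarrow> g x" if "x \<in> V" for x
    using r(2) that unfolding g_def by (simp add: convergent_LIMSEQ_iff)
  have "(\<lambda>m. p_norm_pow V p (F (r m))) \<longlonglongrightarrow> p_norm_pow V p g"
    using lim assms(2) by (rule tendsto_p_norm_pow)
  then have norm: "p_norm_pow V p g = 1"
    using F(2) by (simp add: LIMSEQ_const_iff)
  have energy: "(\<lambda>m. p_energy V E p (F (r m))) \<longlonglongrightarrow> p_energy V E p g"
    using lim assms(2) by (rule tendsto_p_energy)
  have "g x = 0" if "x \<in> boundary V E" for x
  proof -
    have "(\<lambda>m. 0) \<longlonglongrightarrow> g x"
      using F(1) lim[of x] that unfolding admissible_def boundary_def by simp
    then show "g x = 0"
      by (simp add: LIMSEQ_const_iff)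
  qed
  moreover have "\<exists>x\<in>V. g x \<noteq> 0"
    using norm p_norm_pow_eq_0_iff[OF assms(1), of p g] by auto
  ultimately have "admissible V E g"
    unfolding admissible_def by blast
  moreover have "rayleigh V E p g \<le> lambda1p V E p"
  proof (rule field_le_epsilon)
    fix e :: real assume "0 < e"
    then obtain k where k: "1 / Suc k < e"
      by (metis inverse_eq_divide reals_Archimedean)
    have "p_energy V E p g \<le> lambda1p V E p + 1 / Suc k"
    proof (rule LIMSEQ_le_const2[OF energy], intro exI allI impI)
      fix m assume "k \<le> m"
      then have "1 / Suc (r m) \<le> 1 / Suc k"
        using seq_suble[OF r(1), of m] by (simp add: frac_le)
      then show "p_energy V E p (F (r m)) \<le> lambda1p V E p + 1 / Suc k"
        using F(3)[of "r m"] F(2)[of "r m"] unfolding rayleigh_def by simp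
    qed
    then show "rayleigh V E p g \<le> lambda1p V E p + e"
      unfolding rayleigh_def norm using k by simp
  qed
  ultimately show ?thesis
    using that lambda1p_le_rayleigh[of V E g p] by simp
qed

section \<open>Invariance under graph isomorphism\<close>

lemma graph_iso_sym:
  assumes "graph_iso V E W F"
  shows "graph_iso W F V E"
proof -
  obtain h where h: "bij_betw h V W" "\<And>x y. x \<in> V \<Longrightarrow> y \<in> V \<Longrightarrow> E x y \<longleftrightarrow> F (h x) (h y)"
    using assms unfolding graph_iso_def by blast
  define h' where "h' = inv_into V h"
  have bij: "bij_betw h' W V"
    unfolding h'_def using h(1) by (rule bij_betw_inv_into)
  have "h' w \<in> V" "h (h' w) = w" if "w \<in> W" for w
    using that bij_betw_imp_surj_on[OF h(1)] bij_betw_inv_into_right[OF h(1)]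
    unfolding h'_def by (auto simp: inv_into_into)
  then have "\<forall>w\<in>W. \<forall>z\<in>W. F w z \<longleftrightarrow> E (h' w) (h' z)"
    using h(2) by auto
  with bij show ?thesis
    unfolding graph_iso_def by blast
qed

lemma boundary_iso:
  assumes "bij_betw h V W" "\<And>x y. x \<in> V \<Longrightarrow> y \<in> V \<Longrightarrow> E x y \<longleftrightarrow> F (h x) (h y)"
  shows "h ` boundary V E = boundary W F"
proof -
  have "degree V E x = degree W F (h x)" if "x \<in> V" for x
  proof -
    have "{z\<in>W. F (h x) z} = h ` {y\<in>V. E x y}"
      using assms that bij_betw_imp_surj_on[OF assms(1)] by auto
    moreover have "inj_on h {y\<in>V. E x y}"
      using bij_betw_imp_inj_on[OF assms(1)] by (rule inj_on_subset) auto
    ultimately show ?thesis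
      unfolding degree_def by (simp add: card_image)
  qed
  then show ?thesis
    unfolding boundary_def using bij_betw_imp_surj_on[OF assms(1)] by auto
qed

lemma p_energy_iso:
  assumes "bij_betw h V W" "\<And>x y. x \<in> V \<Longrightarrow> y \<in> V \<Longrightarrow> E x y \<longleftrightarrow> F (h x) (h y)"
  shows "p_energy V E p (g \<circ> h) = p_energy W F p g"
proof -
  have "(\<Sum>x\<in>V. \<Sum>y\<in>V. if E x y then \<bar>(g \<circ> h) x - (g \<circ> h) y\<bar> powr p else 0)
      = (\<Sum>x\<in>V. \<Sum>y\<in>V. if F (h x) (h y) then \<bar>g (h x) - g (h y)\<bar> powr p else 0)"
    using assms(2) by (intro sum.cong) auto
  also have "\<dots> = (\<Sum>x\<in>V. \<Sum>z\<in>W. if F (h x) z then \<bar>g (h x) - g z\<bar> powr p else 0)"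
    using sum.reindex_bij_betw[OF assms(1)] by (intro sum.cong) auto
  also have "\<dots> = (\<Sum>w\<in>W. \<Sum>z\<in>W. if F w z then \<bar>g w - g z\<bar> powr p else 0)"
    by (rule sum.reindex_bij_betw[OF assms(1)])
  finally show ?thesis
    unfolding p_energy_def by simp
qed

lemma p_norm_pow_iso: "bij_betw h V W \<Longrightarrow> p_norm_pow V p (g \<circ> h) = p_norm_pow W p g"
  unfolding p_norm_pow_def using sum.reindex_bij_betw[of h V W "\<lambda>w. \<bar>g w\<bar> powr p"] by simp

lemma admissible_iso:
  assumes "bij_betw h V W" "\<And>x y. x \<in> V \<Longrightarrow> y \<in> V \<Longrightarrow> E x y \<longleftrightarrow> F (h x) (h y)"
    and "admissible W F g"
  shows "admissible V E (g \<circ> h)"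
proof -
  have "g (h x) = 0" if "x \<in> boundary V E" for x
    using assms(3) that boundary_iso[of h V W E F, OF assms(1,2)] unfolding admissible_def by blast
  moreover have "\<exists>x\<in>V. g (h x) \<noteq> 0"
    using assms(3) bij_betw_imp_surj_on[OF assms(1)] unfolding admissible_def by blast
  ultimately show ?thesis
    unfolding admissible_def by simp
qed

lemma rayleigh_iso:
  assumes "bij_betw h V W" "\<And>x y. x \<in> V \<Longrightarrow> y \<in> V \<Longrightarrow> E x y \<longleftrightarrow> F (h x) (h y)"
  shows "rayleigh V E p (g \<circ> h) = rayleigh W F p g"
  using p_energy_iso[of h V W E F p g, OF assms] p_norm_pow_iso[OF assms(1)] by (simp add: rayleigh_def)

lemma rayleigh_values_iso_subset:
  assumes "graph_iso V E W F"
  shows "{rayleigh W F p g | g. admissible W F g} \<subseteq> {rayleigh V E p f | f. admissible V E f}"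
proof -
  obtain h where h: "bij_betw h V W" "\<And>x y. x \<in> V \<Longrightarrow> y \<in> V \<Longrightarrow> E x y \<longleftrightarrow> F (h x) (h y)"
    using assms unfolding graph_iso_def by blast
  show ?thesis
    using admissible_iso[of h V W E F, OF h] rayleigh_iso[of h V W E F, OF h]
    by (smt (verit) Collect_mono_iff)
qed

lemma lambda1p_iso:
  assumes "graph_iso V E W F"
  shows "lambda1p V E p = lambda1p W F p"
proof -
  have "{rayleigh V E p f | f. admissible V E f} = {rayleigh W F p g | g. admissible W F g}"
    using rayleigh_values_iso_subset[OF assms] rayleigh_values_iso_subset[OF graph_iso_sym[OF assms]]
    by (rule subset_antisym[rotated])
  then show ?thesis
    unfolding lambda1p_eq_Inf_rayleigh by simp
qed

definition pullback_adj :: "'b set \<Rightarrow> ('b \<Rightarrow> 'a) \<Rightarrow> ('a \<Rightarrow> 'a \<Rightarrow> bool) \<Rightarrow> 'b \<Rightarrow> 'b \<Rightarrow> bool" where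
  "pullback_adj W \<sigma> E i j \<longleftrightarrow> i \<in> W \<and> j \<in> W \<and> E (\<sigma> i) (\<sigma> j)"

lemma simple_graph_pullback:
  "simple_graph V E \<Longrightarrow> finite W \<Longrightarrow> simple_graph W (pullback_adj W \<sigma> E)"
  unfolding simple_graph_def pullback_adj_def by blast

lemma connected_graph_pullback:
  assumes "bij_betw \<sigma> W V" "simple_graph V E" "connected_graph V E"
  shows "connected_graph W (pullback_adj W \<sigma> E)"
proof -
  define \<sigma>' where "\<sigma>' = inv_into W \<sigma>"
  have \<sigma>': "\<sigma>' u \<in> W" "\<sigma> (\<sigma>' u) = u" if "u \<in> V" for u
    using assms(1) that unfolding \<sigma>'_def
    by (auto simp: bij_betw_inv_into_right inv_into_into bij_betw_imp_surj_on)
  have "(pullback_adj W \<sigma> E)\<^sup>*\<^sup>* (\<sigma>' u) (\<sigma>' z)" if "E\<^sup>*\<^sup>* u z" for u z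
    using that
  proof (induction rule: rtranclp_induct)
    case (step y z)
    then have "y \<in> V" "z \<in> V"
      using assms(2) unfolding simple_graph_def by auto
    then have "pullback_adj W \<sigma> E (\<sigma>' y) (\<sigma>' z)"
      using step \<sigma>' unfolding pullback_adj_def by simp
    with step.IH show ?case
      by (rule rtranclp.rtrancl_into_rtrancl)
  qed simp
  moreover have "\<sigma>' (\<sigma> i) = i" if "i \<in> W" for i
    using assms(1) that unfolding \<sigma>'_def by (simp add: bij_betw_inv_into_left)
  ultimately show ?thesis
    using assms(1,3) unfolding connected_graph_def by (metis bij_betw_apply)
qed

lemma rtranclp_exit_edge:
  assumes "E\<^sup>*\<^sup>* x y" "x \<in> S" "y \<notin> S"
  shows "\<exists>u v. u \<in> S \<and> v \<notin> S \<and> E u v"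
  using assms by (induction rule: rtranclp_induct) auto

lemma interior_vertex_two_neighbors:
  assumes "simple_graph V E" "connected_graph V E" "2 \<le> card V" "x \<in> V" "x \<notin> boundary V E"
  obtains y\<^sub>1 y\<^sub>2 where "y\<^sub>1 \<in> V" "y\<^sub>2 \<in> V" "y\<^sub>1 \<noteq> y\<^sub>2" "E x y\<^sub>1" "E x y\<^sub>2"
proof -
  have "\<not> V \<subseteq> {x}"
    using assms(3) card_mono[of "{x}" V] by auto
  then obtain z where "z \<in> V" "z \<notin> {x}"
    by blast
  then obtain v where "E x v"
    using rtranclp_exit_edge[of E x z "{x}"] assms(2,4) unfolding connected_graph_def by auto
  then have "v \<in> {y\<in>V. E x y}"
    using assms(1) unfolding simple_graph_def by auto
  moreover have "card {y\<in>V. E x y} \<noteq> 1"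
    using assms(4,5) unfolding boundary_def degree_def by auto
  moreover have finite: "finite {y\<in>V. E x y}"
    using assms(1) unfolding simple_graph_def by auto
  ultimately have "\<not> card {y\<in>V. E x y} \<le> Suc 0"
    by (metis One_nat_def card_0_eq empty_iff le_SucE le_zero_eq)
  then show ?thesis
    using that finite by (auto simp: card_le_Suc0_iff_eq)
qed

text \<open>A vertex of degree one together with its neighbor would otherwise form a whole
  connected component.\<close>

lemma exists_interior_vertex:
  assumes "simple_graph V E" "connected_graph V E" "3 \<le> card V"
  obtains x where "x \<in> V" "x \<notin> boundary V E"
proof (rule ccontr)
  assume "\<not> thesis"
  then have "V \<subseteq> boundary V E"
    using that by blast
  then have single: "\<exists>u. {z\<in>V. E y z} = {u}" if "y \<in> V" for y
    using that unfolding boundary_def degree_def by (auto simp: card_1_singleton_iff)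
  have in_V: "s \<in> V" "t \<in> V" if "E s t" for s t
    using assms(1) that unfolding simple_graph_def by auto
  have "V \<noteq> {}"
    using assms(3) by auto
  then obtain x where x: "x \<in> V"
    by blast
  obtain u where u: "{z\<in>V. E x z} = {u}"
    using single[OF x] by blast
  then have "u \<in> V" "E u x"
    using assms(1) unfolding simple_graph_def by blast+
  obtain w where w: "{z\<in>V. E u z} = {w}"
    using single[OF \<open>u \<in> V\<close>] by blast
  have "x \<in> {z\<in>V. E u z}"
    using x \<open>E u x\<close> by simp
  then have "w = x"
    using w by simp
  have "t = u" if "E x t" for t
    using u in_V[OF that] that by blast
  moreover have "t = x" if "E u t" for t
    using w \<open>w = x\<close> in_V[OF that] that by blast
  ultimately have closed: "t \<in> {x, u}" if "s \<in> {x, u}" "E s t" for s t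
    using that by blast
  have "card {x, u} \<le> 2"
    by (cases "x = u") auto
  then have "\<not> V \<subseteq> {x, u}"
    using assms(3) card_mono[of "{x, u}" V] by auto
  then obtain z where "z \<in> V" "z \<notin> {x, u}"
    by blast
  moreover have "E\<^sup>*\<^sup>* x z"
    using assms(2) x \<open>z \<in> V\<close> unfolding connected_graph_def by blast
  ultimately obtain s t where "s \<in> {x, u}" "t \<notin> {x, u}" "E s t"
    using rtranclp_exit_edge[of E x z "{x, u}"] by blast
  then show False
    using closed by blast
qed

lemma admissible_exists:
  assumes "simple_graph V E" "connected_graph V E" "3 \<le> card V"
  obtains f where "admissible V E f"
proof -
  obtain x where "x \<in> V" "x \<notin> boundary V E"
    using exists_interior_vertex[OF assms] .
  then have "admissible V E (\<lambda>y. if y = x then 1 else 0)"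
    unfolding admissible_def by auto
  then show ?thesis
    by (rule that)
qed

section \<open>The Euler--Lagrange equation\<close>

text \<open>\<open>sgn_powr p t\<close> is \<open>\<bar>t\<bar>\<^sup>p\<^sup>-\<^sup>2 t\<close>, the nonlinearity of the \<open>p\<close>-Laplacian.\<close>

definition sgn_powr :: "real \<Rightarrow> real \<Rightarrow> real" where
  "sgn_powr p t = sgn t * \<bar>t\<bar> powr (p - 1)"

lemma sgn_powr_le_0_iff [simp]: "sgn_powr p t \<le> 0 \<longleftrightarrow> t \<le> 0"
  and zero_le_sgn_powr_iff [simp]: "0 \<le> sgn_powr p t \<longleftrightarrow> 0 \<le> t"
  and sgn_powr_eq_0_iff [simp]: "sgn_powr p t = 0 \<longleftrightarrow> t = 0"
  unfolding sgn_powr_def by (auto simp: sgn_if)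

lemma has_real_derivative_abs_powr:
  assumes "1 < p"
  shows "((\<lambda>u. \<bar>u\<bar> powr p) has_real_derivative p * sgn_powr p c) (at c)"
proof (cases "c = 0")
  case True
  have lim: "((\<lambda>h. \<bar>h\<bar> powr (p - 1)) \<longlongrightarrow> 0) (at 0)"
    using assms tendsto_rabs_zero[OF tendsto_ident_at[of 0 UNIV]]
    by (intro tendsto_zero_powrI) auto
  have "norm ((\<bar>0 + h\<bar> powr p - \<bar>0\<bar> powr p) / h) \<le> norm (\<bar>h\<bar> powr (p - 1)) * 1" for h :: real
    by (cases "h = 0") (simp_all add: abs_divide powr_diff)
  then have "((\<lambda>h. (\<bar>0 + h\<bar> powr p - \<bar>0\<bar> powr p) / h) \<longlongrightarrow> 0) (at 0)"
    by (intro tendsto_0_le[OF lim] always_eventually allI)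
  then show ?thesis
    using True unfolding DERIV_def by (simp add: sgn_powr_def)
next
  case False
  have "\<forall>\<^sub>F u in nhds c. sgn u = sgn c"
  proof (cases "0 < c")
    case True
    then show ?thesis
      using order_tendstoD(1)[OF tendsto_ident_at, of 0 c UNIV]
      by (auto simp: eventually_at_filter elim: eventually_mono)
  next
    case False
    then show ?thesis
      using order_tendstoD(2)[OF tendsto_ident_at, of c 0 UNIV] \<open>c \<noteq> 0\<close>
      by (auto simp: eventually_at_filter elim: eventually_mono)
  qed
  then have "\<forall>\<^sub>F u in nhds c. \<bar>u\<bar> powr p = (sgn c * u) powr p"
    by (elim eventually_mono) (metis abs_sgn mult.commute)
  moreover have "((\<lambda>u. (sgn c * u) powr p) has_real_derivative
      p * (sgn c * c) powr (p - of_nat 1) * sgn c) (at c)"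
    using False by (intro DERIV_fun_powr derivative_eq_intros) (auto simp: sgn_if)
  ultimately show ?thesis
    by (subst DERIV_cong_ev[OF refl _ refl]) (auto simp: sgn_powr_def abs_sgn ac_simps)
qed

lemma p_energy_split_vertex:
  assumes "simple_graph V E" "x \<in> V"
  shows "p_energy V E p f = (\<Sum>y\<in>{y\<in>V. E x y}. \<bar>f x - f y\<bar> powr p) + p_energy (V - {x}) E p f"
proof -
  define T where "T u v = (if E u v then \<bar>f u - f v\<bar> powr p else 0)" for u v
  have fin: "finite V" and sym: "T u v = T v u" and irrefl: "T u u = 0" for u v
    using assms(1) unfolding simple_graph_def T_def by (auto simp: abs_minus_commute)
  have row: "(\<Sum>v\<in>V. T u v) = T u x + (\<Sum>v\<in>V - {x}. T u v)" for u
    by (rule sum.remove[OF fin assms(2)])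
  have "(\<Sum>u\<in>V. \<Sum>v\<in>V. T u v) = (\<Sum>v\<in>V. T x v) + (\<Sum>u\<in>V - {x}. \<Sum>v\<in>V. T u v)"
    by (rule sum.remove[OF fin assms(2)])
  also have "\<dots> = (\<Sum>v\<in>V. T x v) + (\<Sum>u\<in>V - {x}. T x u) + (\<Sum>u\<in>V - {x}. \<Sum>v\<in>V - {x}. T u v)"
    by (simp add: row sym sum.distrib)
  also have "(\<Sum>u\<in>V - {x}. T x u) = (\<Sum>v\<in>V. T x v)"
    using sum.remove[OF fin assms(2), of "T x"] irrefl by simp
  also have "(\<Sum>v\<in>V. T x v) = (\<Sum>y\<in>{y\<in>V. E x y}. \<bar>f x - f y\<bar> powr p)"
    unfolding T_def using fin by (simp add: sum.inter_filter)
  finally show ?thesis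
    unfolding p_energy_def T_def by simp
qed

lemma has_real_derivative_p_energy_update:
  assumes "1 < p" "simple_graph V E" "x \<in> V"
  shows "((\<lambda>t. p_energy V E p (f(x := f x + t))) has_real_derivative
      p * (\<Sum>y\<in>{y\<in>V. E x y}. sgn_powr p (f x - f y))) (at 0)"
proof -
  have irrefl: "y \<noteq> x" if "y \<in> {y\<in>V. E x y}" for y
    using assms(2) that unfolding simple_graph_def by auto
  have "p_energy (V - {x}) E p (f(x := c)) = p_energy (V - {x}) E p f" for c
    unfolding p_energy_def by (intro arg_cong2[where f = "(/)"] sum.cong) auto
  moreover have "(\<Sum>y\<in>{y\<in>V. E x y}. \<bar>(f(x := f x + t)) x - (f(x := f x + t)) y\<bar> powr p)
      = (\<Sum>y\<in>{y\<in>V. E x y}. \<bar>f x - f y + t\<bar> powr p)" for t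
    using irrefl by (intro sum.cong) (auto simp: algebra_simps)
  ultimately have energy: "p_energy V E p (f(x := f x + t))
      = (\<Sum>y\<in>{y\<in>V. E x y}. \<bar>f x - f y + t\<bar> powr p) + p_energy (V - {x}) E p f" for t
    using p_energy_split_vertex[OF assms(2,3)] by simp
  have "((\<lambda>t. \<bar>f x - f y + t\<bar> powr p) has_real_derivative p * sgn_powr p (f x - f y + 0) * 1) (at 0)"
    for y
    by (rule DERIV_chain2[OF has_real_derivative_abs_powr[OF assms(1)]]) (auto intro!: derivative_eq_intros)
  then have "((\<lambda>t. (\<Sum>y\<in>{y\<in>V. E x y}. \<bar>f x - f y + t\<bar> powr p) + p_energy (V - {x}) E p f)
      has_real_derivative (\<Sum>y\<in>{y\<in>V. E x y}. p * sgn_powr p (f x - f y)) + 0) (at 0)"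
    by (intro DERIV_add DERIV_sum DERIV_const) simp
  then show ?thesis
    unfolding energy by (simp add: sum_distrib_left)
qed

lemma has_real_derivative_p_norm_pow_update:
  assumes "1 < p" "finite V" "x \<in> V"
  shows "((\<lambda>t. p_norm_pow V p (f(x := f x + t))) has_real_derivative p * sgn_powr p (f x)) (at 0)"
proof -
  have norm: "p_norm_pow V p (f(x := f x + t)) = \<bar>f x + t\<bar> powr p + p_norm_pow (V - {x}) p f" for t
  proof -
    have "(\<Sum>y\<in>V - {x}. \<bar>(f(x := f x + t)) y\<bar> powr p) = (\<Sum>y\<in>V - {x}. \<bar>f y\<bar> powr p)"
      by (intro sum.cong) auto
    then show ?thesis
      unfolding p_norm_pow_def using assms(2,3) by (simp add: sum.remove)
  qed
  have "((\<lambda>t. \<bar>f x + t\<bar> powr p) has_real_derivative p * sgn_powr p (f x + 0) * 1) (at 0)"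
    by (rule DERIV_chain2[OF has_real_derivative_abs_powr[OF assms(1)]]) (auto intro!: derivative_eq_intros)
  then have "((\<lambda>t. \<bar>f x + t\<bar> powr p + p_norm_pow (V - {x}) p f) has_real_derivative
      p * sgn_powr p (f x) + 0) (at 0)"
    by (intro DERIV_add DERIV_const) simp
  then show ?thesis
    unfolding norm by simp
qed

text \<open>Perturbing a minimizer at an interior vertex \<open>x\<close> keeps it vanishing on the boundary, so
  \<open>t \<mapsto> energy - \<lambda> \<cdot> norm\<close> of the perturbation by \<open>t\<close> at \<open>x\<close> is minimal at \<open>t = 0\<close>.\<close>

lemma euler_lagrange:
  assumes "1 < p" "simple_graph V E" "x \<in> V" "x \<notin> boundary V E" "admissible V E f"
    and minimizer: "\<And>g. admissible V E g \<Longrightarrow> rayleigh V E p f \<le> rayleigh V E p g"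
  shows "(\<Sum>y\<in>{y\<in>V. E x y}. sgn_powr p (f x - f y)) = rayleigh V E p f * sgn_powr p (f x)"
proof -
  have fin: "finite V"
    using assms(2) unfolding simple_graph_def by auto
  define lam where "lam = rayleigh V E p f"
  define F where "F t = p_energy V E p (f(x := f x + t)) - lam * p_norm_pow V p (f(x := f x + t))" for t
  have "p_norm_pow V p f \<noteq> 0"
    using p_norm_pow_pos[OF fin assms(5), of p] by simp
  then have "F 0 = 0"
    unfolding F_def lam_def rayleigh_def by simp
  have "0 \<le> F t" for t
  proof (cases "admissible V E (f(x := f x + t))")
    case True
    then have "lam * p_norm_pow V p (f(x := f x + t)) \<le> p_energy V E p (f(x := f x + t))"
      using minimizer[of "f(x := f x + t)"] p_norm_pow_pos[OF fin True]
      unfolding lam_def rayleigh_def by (simp add: le_divide_eq)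
    then show ?thesis
      unfolding F_def by simp
  next
    case False
    have "\<forall>y\<in>boundary V E. (f(x := f x + t)) y = 0"
      using assms(4,5) unfolding admissible_def by auto
    with False have "\<forall>y\<in>V. (f(x := f x + t)) y = 0"
      unfolding admissible_def by blast
    then have "p_norm_pow V p (f(x := f x + t)) = 0"
      using p_norm_pow_eq_0_iff[OF fin] by blast
    then show ?thesis
      unfolding F_def by (simp add: p_energy_nonneg)
  qed
  then have "F 0 \<le> F t" for t
    using \<open>F 0 = 0\<close> by simp
  moreover have "(F has_real_derivative
      p * (\<Sum>y\<in>{y\<in>V. E x y}. sgn_powr p (f x - f y)) - lam * (p * sgn_powr p (f x))) (at 0)"
    unfolding F_def
    by (intro DERIV_diff DERIV_cmult has_real_derivative_p_energy_update
        has_real_derivative_p_norm_pow_update assms(1-3) fin)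
  ultimately have "p * (\<Sum>y\<in>{y\<in>V. E x y}. sgn_powr p (f x - f y)) - lam * (p * sgn_powr p (f x)) = 0"
    by (intro DERIV_local_min[of F _ 0 1]) auto
  then show ?thesis
    unfolding lam_def using assms(1) by simp
qed

definition up_edges :: "nat \<Rightarrow> (nat \<Rightarrow> nat \<Rightarrow> bool) \<Rightarrow> (nat \<times> nat) set" where
  "up_edges n A = {(i, j). 1 \<le> i \<and> i < j \<and> j \<le> n \<and> A i j}"

lemma up_edges_eq_filter: "up_edges n A = {e \<in> {1..n} \<times> {1..n}. fst e < snd e \<and> A (fst e) (snd e)}"
  unfolding up_edges_def by auto

lemma finite_up_edges: "finite (up_edges n A)"
  unfolding up_edges_eq_filter by simp

definition crossing_edges :: "nat \<Rightarrow> (nat \<Rightarrow> nat \<Rightarrow> bool) \<Rightarrow> nat \<Rightarrow> (nat \<times> nat) set" where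
  "crossing_edges n A k = {e \<in> up_edges n A. fst e \<le> k \<and> k < snd e}"

lemma finite_crossing_edges: "finite (crossing_edges n A k)"
  unfolding crossing_edges_def using finite_up_edges by (rule finite_subset[rotated]) auto

lemma sum_spanned_eq_sum_card_crossing_edges:
  fixes s :: "nat \<Rightarrow> real"
  shows "(\<Sum>(i, j)\<in>up_edges n A. \<Sum>k\<in>{i..<j}. s k) = (\<Sum>k\<in>{1..<n}. card (crossing_edges n A k) * s k)"
proof -
  have "(\<Sum>(i, j)\<in>up_edges n A. \<Sum>k\<in>{i..<j}. s k)
      = (\<Sum>e\<in>up_edges n A. \<Sum>k\<in>{k\<in>{1..<n}. fst e \<le> k \<and> k < snd e}. s k)"
    by (intro sum.cong refl) (auto simp: up_edges_def intro: sum.cong)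
  also have "\<dots> = (\<Sum>k\<in>{1..<n}. \<Sum>e | e \<in> up_edges n A \<and> fst e \<le> k \<and> k < snd e. s k)"
    using finite_up_edges by (rule sum.swap_restrict) simp
  finally show ?thesis
    unfolding crossing_edges_def by simp
qed

lemma p_energy_eq_sum_up_edges:
  assumes "simple_graph {1..n} A"
  shows "p_energy {1..n} A p f = (\<Sum>(i, j)\<in>up_edges n A. \<bar>f i - f j\<bar> powr p)"
proof -
  define T where "T i j = (if A i j then \<bar>f i - f j\<bar> powr p else 0)" for i j
  have sym: "T i j = T j i" and irrefl: "T i i = 0" for i j
    using assms unfolding simple_graph_def T_def by (auto simp: abs_minus_commute)
  define U where "U = (\<Sum>i\<in>{1..n}. \<Sum>j\<in>{1..n}. if i < j then T i j else 0)"
  have split: "T i j = (if i < j then T i j else 0) + (if j < i then T j i else 0)" for i j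
    using sym irrefl by (cases i j rule: linorder_cases) auto
  have "(\<Sum>i\<in>{1..n}. \<Sum>j\<in>{1..n}. T i j)
      = (\<Sum>i\<in>{1..n}. \<Sum>j\<in>{1..n}. (if i < j then T i j else 0) + (if j < i then T j i else 0))"
    by (subst split) simp
  also have "\<dots> = U + (\<Sum>i\<in>{1..n}. \<Sum>j\<in>{1..n}. if j < i then T j i else 0)"
    unfolding U_def by (simp add: sum.distrib)
  also have "(\<Sum>i\<in>{1..n}. \<Sum>j\<in>{1..n}. if j < i then T j i else 0) = U"
    unfolding U_def by (rule sum.swap)
  also have "U = (\<Sum>(i, j)\<in>up_edges n A. \<bar>f i - f j\<bar> powr p)"
    unfolding U_def T_def up_edges_eq_filter sum.cartesian_product
    by (subst sum.inter_filter) (auto simp: case_prod_beta intro!: sum.cong)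
  finally show ?thesis
    unfolding p_energy_def T_def by simp
qed

lemma adj_eq_if_up_edges_eq:
  assumes "simple_graph {1..n} A" "simple_graph {1..n} B" "up_edges n A = up_edges n B"
    and "i \<in> {1..n}" "j \<in> {1..n}"
  shows "A i j \<longleftrightarrow> B i j"
proof -
  have "(i, j) \<in> up_edges n A \<longleftrightarrow> (i, j) \<in> up_edges n B" for i j
    using assms(3) by simp
  then have "A i j \<longleftrightarrow> B i j" if "i < j" "i \<in> {1..n}" "j \<in> {1..n}" for i j
    using that unfolding up_edges_def by auto
  moreover have "A i j \<longleftrightarrow> A j i" "B i j \<longleftrightarrow> B j i" "\<not> A i i" "\<not> B i i"
    using assms(1,2) unfolding simple_graph_def by blast+
  ultimately show ?thesis
    using assms(4,5) by (cases i j rule: linorder_cases) auto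
qed

section \<open>The tadpole\<close>

abbreviation tadpole3 :: "nat \<Rightarrow> nat \<Rightarrow> nat \<Rightarrow> bool" where
  "tadpole3 n \<equiv> tadpole_adj n 3"

lemma simple_graph_tadpole: "i \<noteq> 1 \<Longrightarrow> simple_graph {1..n} (tadpole_adj n i)"
  unfolding simple_graph_def tadpole_adj_def by auto

lemma up_edges_tadpole3:
  assumes "3 \<le> n"
  shows "up_edges n (tadpole3 n) = insert (1, 3) ((\<lambda>k. (k, Suc k)) ` {1..<n})"
  using assms unfolding up_edges_def tadpole_adj_def by auto

lemma boundary_tadpole3_subset:
  assumes "4 \<le> n"
  shows "boundary {1..n} (tadpole3 n) \<subseteq> {n}"
proof
  fix k assume k: "k \<in> boundary {1..n} (tadpole3 n)"
  define N where "N = {y\<in>{1..n}. tadpole3 n k y}"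
  have "k \<in> {1..n}" "card N = 1"
    using k unfolding boundary_def degree_def N_def by auto
  moreover have "2 \<le> card N" if "k < n"
  proof -
    obtain y z where "y \<in> N" "z \<in> N" "y \<noteq> z"
    proof (cases "k = 1")
      case True
      then have "2 \<in> N" "3 \<in> N"
        using assms unfolding N_def tadpole_adj_def by auto
      then show ?thesis
        by (rule that) simp
    next
      case False
      then have "k - 1 \<in> N" "Suc k \<in> N"
        using \<open>k \<in> {1..n}\<close> \<open>k < n\<close> unfolding N_def tadpole_adj_def by auto
      then show ?thesis
        by (rule that) simp
    qed
    then have "card {y, z} \<le> card N"
      unfolding N_def by (intro card_mono) auto
    then show ?thesis
      using \<open>y \<noteq> z\<close> by simp
  qed
  ultimately show "k \<in> {n}"
    by fastforce
qed

lemma admissible_tadpole3: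
  assumes "4 \<le> n" "a n = 0" "a 1 \<noteq> 0"
  shows "admissible {1..n} (tadpole3 n) a"
  using assms boundary_tadpole3_subset[OF assms(1)] unfolding admissible_def
  by (auto intro!: bexI[of _ 1])

lemma p_energy_tadpole3:
  assumes "3 \<le> n" "antimono_on {1..n} a"
  shows "p_energy {1..n} (tadpole3 n) p a = (a 1 - a 3) powr p + (\<Sum>k\<in>{1..<n}. (a k - a (Suc k)) powr p)"
proof -
  have simple: "simple_graph {1..n} (tadpole3 n)"
    by (rule simple_graph_tadpole) simp
  have mono: "a 3 \<le> a 1" "\<And>k. k \<in> {1..<n} \<Longrightarrow> a (Suc k) \<le> a k"
    using assms(1) monotone_onD[OF assms(2)] by simp_all
  have "inj_on (\<lambda>k. (k, Suc k)) {1..<n}"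
    by (auto simp: inj_on_def)
  then have "p_energy {1..n} (tadpole3 n) p a
      = \<bar>a 1 - a 3\<bar> powr p + (\<Sum>k\<in>{1..<n}. \<bar>a k - a (Suc k)\<bar> powr p)"
    unfolding p_energy_eq_sum_up_edges[OF simple] up_edges_tadpole3[OF assms(1)]
    by (subst sum.insert) (auto simp: sum.reindex)
  also have "\<dots> = (a 1 - a 3) powr p + (\<Sum>k\<in>{1..<n}. (a k - a (Suc k)) powr p)"
    using mono by simp
  finally show ?thesis .
qed

lemma p_energy_tadpole3_pos:
  assumes "4 \<le> n" "antimono_on {1..n} a" "a n < a 1"
  shows "0 < p_energy {1..n} (tadpole3 n) p a"
proof -
  have "(\<Sum>k\<in>{1..<n}. a k - a (Suc k)) = a 1 - a n"
    using sum_Suc_diff'[of 1 n "\<lambda>k. - a k"] assms(1) by simp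
  then have "\<not> (\<forall>k\<in>{1..<n}. a k - a (Suc k) \<le> 0)"
    using assms(3) sum_nonpos[of "{1..<n}" "\<lambda>k. a k - a (Suc k)"] by force
  then obtain k where k: "k \<in> {1..<n}" "0 < a k - a (Suc k)"
    by (auto simp: not_le)
  have "(a k - a (Suc k)) powr p \<le> (\<Sum>k\<in>{1..<n}. (a k - a (Suc k)) powr p)"
    using k by (intro member_le_sum) auto
  moreover have "3 \<le> n"
    using assms(1) by simp
  ultimately show ?thesis
    unfolding p_energy_tadpole3[OF \<open>3 \<le> n\<close> assms(2)]
    using k(2) by (smt (verit) powr_ge_zero powr_gt_zero)
qed

text \<open>Euler--Lagrange at a plateau \<open>a (Suc k) = a k\<close>: all neighbor terms are \<open>\<le> 0\<close> while
  the right-hand side is \<open>\<ge> 0\<close>, so both sides vanish.\<close>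

lemma tadpole3_minimizer_plateau:
  assumes "1 < p" "4 \<le> n" "antimono_on {1..n} a" "a n = 0" "0 < a 1"
    and minimizer: "\<And>g. admissible {1..n} (tadpole3 n) g \<Longrightarrow>
      rayleigh {1..n} (tadpole3 n) p a \<le> rayleigh {1..n} (tadpole3 n) p g"
    and k: "2 \<le> k" "k < n" and plateau: "a (Suc k) = a k"
  shows "a (k - 1) = 0"
proof -
  let ?T = "tadpole3 n" and ?R = "rayleigh {1..n} (tadpole3 n) p a"
  define N where "N = {y\<in>{1..n}. ?T k y}"
  have admissible: "admissible {1..n} ?T a"
    using admissible_tadpole3 assms(2,4,5) by simp
  have mono: "a j \<le> a i" if "1 \<le> i" "i \<le> j" "j \<le> n" for i j
    using monotone_onD[OF assms(3)] that by simp
  have "0 < ?R"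
    unfolding rayleigh_def
    using p_energy_tadpole3_pos[OF assms(2,3)] p_norm_pow_pos[OF _ admissible] assms(4,5) by simp
  have "k \<in> {1..n}" "k \<notin> boundary {1..n} ?T"
    using boundary_tadpole3_subset[OF assms(2)] k by auto
  moreover have "simple_graph {1..n} ?T"
    by (rule simple_graph_tadpole) simp
  ultimately have EL: "(\<Sum>y\<in>N. sgn_powr p (a k - a y)) = ?R * sgn_powr p (a k)"
    unfolding N_def using euler_lagrange[OF assms(1) _ _ _ admissible minimizer] by blast
  have nonpos: "sgn_powr p (a k - a y) \<le> 0" if "y \<in> N" for y
    using that mono[of y k] plateau k unfolding N_def tadpole_adj_def by auto
  have "k - 1 \<in> N"
    using k unfolding N_def tadpole_adj_def by auto
  then have "(\<Sum>y\<in>N. sgn_powr p (a k - a y))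
      = sgn_powr p (a k - a (k - 1)) + (\<Sum>y\<in>N - {k - 1}. sgn_powr p (a k - a y))"
    unfolding N_def by (simp add: sum.remove)
  moreover have "(\<Sum>y\<in>N - {k - 1}. sgn_powr p (a k - a y)) \<le> 0"
    using nonpos by (intro sum_nonpos) simp
  moreover have "0 \<le> ?R * sgn_powr p (a k)"
    using \<open>0 < ?R\<close> mono[of k n] assms(4) k by simp
  ultimately have "sgn_powr p (a k - a (k - 1)) = 0" "?R * sgn_powr p (a k) = 0"
    using EL nonpos[OF \<open>k - 1 \<in> N\<close>] by linarith+
  then show ?thesis
    using \<open>0 < ?R\<close> by simp
qed

lemma tadpole3_minimizer_strictly_decreasing:
  assumes "1 < p" "4 \<le> n" "antimono_on {1..n} a" "a n = 0" "0 < a 1"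
    and minimizer: "\<And>g. admissible {1..n} (tadpole3 n) g \<Longrightarrow>
      rayleigh {1..n} (tadpole3 n) p a \<le> rayleigh {1..n} (tadpole3 n) p g"
  shows "2 \<le> k \<Longrightarrow> k < n \<Longrightarrow> a (Suc k) < a k"
proof (induction k rule: less_induct)
  case (less k)
  show ?case
  proof (rule ccontr)
    assume "\<not> a (Suc k) < a k"
    then have "a (Suc k) = a k"
      using monotone_onD[OF assms(3), of k "Suc k"] less.prems by simp
    then have "a (k - 1) = 0"
      using tadpole3_minimizer_plateau[OF assms less.prems] by simp
    moreover have "1 \<le> k - 1"
      using less.prems by simp
    ultimately have "a k = a (k - 1)"
      using monotone_onD[OF assms(3), of k n] monotone_onD[OF assms(3), of "k - 1" k] assms(4) less.prems
      by auto
    then have "a (Suc (k - 1)) = a (k - 1)"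
      using less.prems by simp
    show False
    proof (cases "k = 2")
      case True
      then show False
        using \<open>a (k - 1) = 0\<close> assms(5) by simp
    next
      case False
      then have "2 \<le> k - 1" "k - 1 < k" "k - 1 < n"
        using less.prems by arith+
      then show False
        using less.IH[of "k - 1"] \<open>a (Suc (k - 1)) = a (k - 1)\<close> by simp
    qed
  qed
qed

section \<open>Sorted labelings\<close>

lemma nonincreasing_enumeration:
  fixes h :: "'a \<Rightarrow> real"
  assumes "finite V" "card V = n"
  obtains \<sigma> where "bij_betw \<sigma> {1..n} V" "antimono_on {1..n} (h \<circ> \<sigma>)"
proof -
  obtain ys where "set ys = V" "distinct ys"
    using finite_distinct_list[OF assms(1)] by blast
  define xs where "xs = sort_key (\<lambda>x. - h x) ys"
  have xs: "distinct xs" "set xs = V" "length xs = n"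
    using assms \<open>set ys = V\<close> \<open>distinct ys\<close> distinct_card[of ys] by (simp_all add: xs_def)
  have "bij_betw (\<lambda>i. i - 1) {1..n} {..<n}"
    by (rule bij_betw_byWitness[where f' = Suc]) auto
  moreover have "bij_betw ((!) xs) {..<n} V"
    using xs by (intro bij_betw_nth) auto
  ultimately have "bij_betw (\<lambda>i. xs ! (i - 1)) {1..n} V"
    using bij_betw_trans by (fastforce simp: o_def)
  moreover have "antimono_on {1..n} (h \<circ> (\<lambda>i. xs ! (i - 1)))"
  proof (rule monotone_onI)
    fix i j assume "i \<in> {1..n}" "j \<in> {1..n}" "i \<le> j"
    then have "map (\<lambda>x. - h x) xs ! (i - 1) \<le> map (\<lambda>x. - h x) xs ! (j - 1)"
      using xs by (intro sorted_nth_mono) (auto simp: xs_def)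
    then show "(h \<circ> (\<lambda>i. xs ! (i - 1))) j \<le> (h \<circ> (\<lambda>i. xs ! (i - 1))) i"
      using \<open>i \<in> {1..n}\<close> \<open>j \<in> {1..n}\<close> xs by auto
  qed
  ultimately show ?thesis
    using that by blast
qed

definition edge_slack :: "real \<Rightarrow> (nat \<Rightarrow> real) \<Rightarrow> nat \<Rightarrow> nat \<Rightarrow> real" where
  "edge_slack p a i j = (a i - a j) powr p - (\<Sum>k\<in>{i..<j}. (a k - a (Suc k)) powr p)"

lemma edge_slack_nonneg:
  assumes "1 \<le> p" "i \<le> j" "antimono_on {i..j} a"
  shows "0 \<le> edge_slack p a i j"
proof -
  have "(\<Sum>k\<in>{i..<l}. (a k - a (Suc k)) powr p) \<le> (a i - a l) powr p" if "i \<le> l" "l \<le> j" for l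
    using that
  proof (induction l rule: dec_induct)
    case (step l)
    have "a (Suc l) \<le> a l" "a l \<le> a i"
      using step monotone_onD[OF assms(3)] by auto
    then have "(a i - a l) powr p + (a l - a (Suc l)) powr p \<le> (a i - a (Suc l)) powr p"
      using powr_superadditive[of "a i - a l" "a l - a (Suc l)" p] assms(1) by simp
    then show ?case
      using step by simp
  qed simp
  then show ?thesis
    unfolding edge_slack_def using assms(2) by simp
qed

lemma edge_slack_mono:
  assumes "1 \<le> p" "i \<le> j" "j \<le> l" "antimono_on {i..l} a"
  shows "edge_slack p a i j \<le> edge_slack p a i l"
proof -
  have "a j \<le> a i" "a l \<le> a j"
    using assms(2,3) monotone_onD[OF assms(4)] by auto
  then have "(a i - a j) powr p + (a j - a l) powr p \<le> (a i - a l) powr p"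
    using powr_superadditive[of "a i - a j" "a j - a l" p] assms(1) by simp
  moreover have "0 \<le> edge_slack p a j l"
    using assms by (intro edge_slack_nonneg) (auto elim: monotone_on_subset)
  moreover have "{i..<l} = {i..<j} \<union> {j..<l}"
    using assms by auto
  ultimately show ?thesis
    unfolding edge_slack_def by (simp add: sum.union_disjoint)
qed

lemma edge_slack_mono_strict:
  assumes "1 < p" "i \<le> j" "j \<le> l" "antimono_on {i..l} a" "a j < a i" "a l < a j"
  shows "edge_slack p a i j < edge_slack p a i l"
proof -
  have "(a i - a j) powr p + (a j - a l) powr p < (a i - a l) powr p"
    using powr_superadditive_strict[of "a i - a j" "a j - a l" p] assms by simp
  moreover have "0 \<le> edge_slack p a j l"
    using assms by (intro edge_slack_nonneg) (auto elim: monotone_on_subset)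
  moreover have "{i..<l} = {i..<j} \<union> {j..<l}"
    using assms by auto
  ultimately show ?thesis
    unfolding edge_slack_def by (simp add: sum.union_disjoint)
qed

locale sorted_labeling =
  fixes n :: nat and A :: "nat \<Rightarrow> nat \<Rightarrow> bool" and a :: "nat \<Rightarrow> real"
  assumes four_le: "4 \<le> n"
    and simple: "simple_graph {1..n} A"
    and connected: "connected_graph {1..n} A"
    and boundary_nonempty: "boundary {1..n} A \<noteq> {}"
    and admissible: "admissible {1..n} A a"
    and nonneg: "\<And>i. 0 \<le> a i"
    and antimono: "antimono_on {1..n} a"

begin

lemma a_antimono: "1 \<le> i \<Longrightarrow> i \<le> j \<Longrightarrow> j \<le> n \<Longrightarrow> a j \<le> a i"
  using monotone_onD[OF antimono] by simp

lemma edge_in_range: "A i j \<Longrightarrow> i \<in> {1..n} \<and> j \<in> {1..n}"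
  using simple unfolding simple_graph_def by blast

lemma edge_irrefl: "A i j \<Longrightarrow> i \<noteq> j"
  using simple unfolding simple_graph_def by blast

lemma last_eq_0: "a n = 0"
proof -
  obtain b where "b \<in> boundary {1..n} A"
    using boundary_nonempty by blast
  then have "b \<in> {1..n}" "a b = 0"
    using admissible unfolding boundary_def admissible_def by auto
  then show ?thesis
    using a_antimono[of b n] nonneg[of n] by simp
qed

lemma first_pos: "0 < a 1"
proof -
  obtain x where "x \<in> {1..n}" "a x \<noteq> 0"
    using admissible unfolding admissible_def by blast
  then show ?thesis
    using a_antimono[of 1 x] nonneg[of x] by simp
qed

lemma two_neighbors_if_pos:
  assumes "i \<in> {1..n}" "0 < a i"
  obtains j\<^sub>1 j\<^sub>2 where "j\<^sub>1 \<noteq> j\<^sub>2" "A i j\<^sub>1" "A i j\<^sub>2"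
proof -
  have "i \<notin> boundary {1..n} A"
    using admissible assms(2) unfolding admissible_def by auto
  then show ?thesis
    using interior_vertex_two_neighbors[OF simple connected _ assms(1)] four_le that by auto
qed

lemma far_neighbor:
  assumes "i \<in> {1, 2}" "0 < a i"
  obtains j where "3 \<le> j" "A i j"
proof -
  have "i \<in> {1..n}"
    using assms(1) four_le by auto
  then obtain j\<^sub>1 j\<^sub>2 where j: "j\<^sub>1 \<noteq> j\<^sub>2" "A i j\<^sub>1" "A i j\<^sub>2"
    using two_neighbors_if_pos assms(2) by metis
  then have "j\<^sub>1 \<in> {1..n} - {i}" "j\<^sub>2 \<in> {1..n} - {i}"
    using edge_in_range edge_irrefl by blast+
  then have "3 \<le> j\<^sub>1 \<or> 3 \<le> j\<^sub>2"
    using assms(1) j(1) by auto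
  then show ?thesis
    using that j by blast
qed

lemma crossing_edge:
  assumes "1 \<le> k" "k < n"
  obtains i j where "1 \<le> i" "i \<le> k" "k < j" "j \<le> n" "A i j"
proof -
  have "A\<^sup>*\<^sup>* 1 n"
    using connected assms unfolding connected_graph_def by simp
  then obtain i j where "i \<in> {1..k}" "j \<notin> {1..k}" "A i j"
    using rtranclp_exit_edge[of A 1 n "{1..k}"] assms by auto
  then show ?thesis
    using edge_in_range[of i j] by (intro that[of i j]) auto
qed

lemma p_energy_eq: "p_energy {1..n} A p a = (\<Sum>(i, j)\<in>up_edges n A. (a i - a j) powr p)"
  unfolding p_energy_eq_sum_up_edges[OF simple]
  using a_antimono by (intro sum.cong) (auto simp: up_edges_def)

lemma card_crossing_edges:
  shows "1 \<le> k \<Longrightarrow> k < n \<Longrightarrow> 1 \<le> card (crossing_edges n A k)"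
    and "2 \<le> card (crossing_edges n A 1)"
    and "0 < a 2 \<Longrightarrow> 2 \<le> card (crossing_edges n A 2)"
proof -
  have two: "2 \<le> card (crossing_edges n A k)"
    if "e \<in> crossing_edges n A k" "e' \<in> crossing_edges n A k" "e \<noteq> e'" for e e' k
    using card_mono[OF finite_crossing_edges[of n A k], of "{e, e'}"] that by simp
  show "1 \<le> card (crossing_edges n A k)" if k: "1 \<le> k" "k < n"
  proof -
    obtain i j where "1 \<le> i" "i \<le> k" "k < j" "j \<le> n" "A i j"
      using crossing_edge[OF k] .
    then have "(i, j) \<in> crossing_edges n A k"
      unfolding crossing_edges_def up_edges_def by auto
    then show ?thesis
      using finite_crossing_edges card_gt_0_iff[of "crossing_edges n A k"] by force
  qed
  have "1 \<in> {1..n}"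
    using four_le by simp
  then obtain j\<^sub>1 j\<^sub>2 where "j\<^sub>1 \<noteq> j\<^sub>2" "A 1 j\<^sub>1" "A 1 j\<^sub>2"
    using two_neighbors_if_pos first_pos by metis
  then have "(1, j\<^sub>1) \<in> crossing_edges n A 1" "(1, j\<^sub>2) \<in> crossing_edges n A 1"
    using edge_in_range edge_irrefl unfolding crossing_edges_def up_edges_def by fastforce+
  then show "2 \<le> card (crossing_edges n A 1)"
    using two \<open>j\<^sub>1 \<noteq> j\<^sub>2\<close> by blast
  show "2 \<le> card (crossing_edges n A 2)" if pos: "0 < a 2"
  proof -
    obtain j where "3 \<le> j" "A 1 j"
      using far_neighbor[of 1] first_pos by blast
    obtain m where "3 \<le> m" "A 2 m"
      using far_neighbor[of 2] pos by blast
    have "(1, j) \<in> crossing_edges n A 2" "(2, m) \<in> crossing_edges n A 2"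
      using \<open>3 \<le> j\<close> \<open>A 1 j\<close> \<open>3 \<le> m\<close> \<open>A 2 m\<close> edge_in_range
      unfolding crossing_edges_def up_edges_def by fastforce+
    then show ?thesis
      using two by fastforce
  qed
qed

lemma antimono_on_interval: "1 \<le> i \<Longrightarrow> j \<le> n \<Longrightarrow> antimono_on {i..j} a"
  using antimono by (rule monotone_on_subset) auto

lemma sum_steps_le_sum_spanned_steps:
  "(\<Sum>k\<in>{1..<n}. (a k - a (Suc k)) powr p) + (a 1 - a 2) powr p + (a 2 - a 3) powr p
    \<le> (\<Sum>(i, j)\<in>up_edges n A. \<Sum>k\<in>{i..<j}. (a k - a (Suc k)) powr p)"
proof -
  define s where "s k = (a k - a (Suc k)) powr p" for k
  note spanned = sum_spanned_eq_sum_card_crossing_edges[of s n A]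
  have "s k + (if k \<in> {1, 2} then s k else 0) \<le> real (card (crossing_edges n A k)) * s k"
    if k: "k \<in> {1..<n}" for k
  proof -
    consider "k = 1" | "k = 2" "0 < a 2" | "k = 2" "a 2 = 0" | "3 \<le> k"
      using k nonneg[of 2] by force
    then show ?thesis
    proof cases
      case 3
      then have "a 3 = 0"
        using a_antimono[of 2 3] nonneg[of 3] four_le by simp
      then show ?thesis
        using 3 unfolding s_def by simp
    next
      case 4
      then have "1 * s k \<le> real (card (crossing_edges n A k)) * s k"
        using k card_crossing_edges(1)[of k] unfolding s_def by (intro mult_right_mono) auto
      then show ?thesis
        using 4 by simp
    qed (use card_crossing_edges(2,3) in \<open>auto simp: s_def intro!: mult_right_mono\<close>)
  qed
  then have "(\<Sum>k\<in>{1..<n}. s k + (if k \<in> {1, 2} then s k else 0))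
      \<le> (\<Sum>(i, j)\<in>up_edges n A. \<Sum>k\<in>{i..<j}. s k)"
    unfolding spanned by (rule sum_mono)
  moreover have "{1..<n} \<inter> {k. k \<in> {1, 2}} = {1, 2}"
    using four_le by auto
  then have "(\<Sum>k\<in>{1..<n}. if k \<in> {1, 2} then s k else 0) = s 1 + s 2"
    by (simp add: sum.If_cases)
  ultimately show ?thesis
    unfolding s_def by (simp add: sum.distrib numeral_eq_Suc)
qed

text \<open>Every edge \<open>(i, l)\<close> costs the \<open>p\<close>-th powers of the unit steps it spans plus its
  slack. Each step is spanned at least once and the first two at least twice (or vanish),
  whereas the tadpole pays for each step once plus the chord \<open>(1, 3)\<close>, i.e. the chord's slack
  plus the first two steps.\<close>

lemma tadpole3_energy_gap:
  assumes "(1, j) \<in> up_edges n A"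
  shows "edge_slack p a 1 j - edge_slack p a 1 3 + (\<Sum>(i, l)\<in>up_edges n A - {(1, j)}. edge_slack p a i l)
    \<le> p_energy {1..n} A p a - p_energy {1..n} (tadpole3 n) p a"
proof -
  define S where "S i l = (\<Sum>k\<in>{i..<l}. (a k - a (Suc k)) powr p)" for i l
  have "p_energy {1..n} A p a = (\<Sum>(i, l)\<in>up_edges n A. edge_slack p a i l + S i l)"
    unfolding p_energy_eq edge_slack_def S_def by simp
  also have "\<dots> = edge_slack p a 1 j + (\<Sum>(i, l)\<in>up_edges n A - {(1, j)}. edge_slack p a i l)
      + (\<Sum>(i, l)\<in>up_edges n A. S i l)"
    using assms finite_up_edges by (simp add: sum.distrib split_def sum.remove)
  finally have A: "p_energy {1..n} A p a = \<dots>" .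
  have "{1..<3} = {1, 2::nat}"
    by auto
  then have "p_energy {1..n} (tadpole3 n) p a
      = edge_slack p a 1 3 + (a 1 - a 2) powr p + (a 2 - a 3) powr p
        + (\<Sum>k\<in>{1..<n}. (a k - a (Suc k)) powr p)"
    using p_energy_tadpole3[OF _ antimono] four_le by (simp add: edge_slack_def numeral_eq_Suc)
  then show ?thesis
    using A sum_steps_le_sum_spanned_steps[of p] unfolding S_def by simp
qed

lemma p_energy_tadpole3_le:
  assumes "1 \<le> p"
  shows "p_energy {1..n} (tadpole3 n) p a \<le> p_energy {1..n} A p a"
proof -
  obtain j where "3 \<le> j" "A 1 j"
    using far_neighbor[of 1] first_pos by blast
  then have j: "(1, j) \<in> up_edges n A" "j \<le> n"
    using edge_in_range[of 1 j] unfolding up_edges_def by auto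
  have "edge_slack p a 1 3 \<le> edge_slack p a 1 j"
    using assms \<open>3 \<le> j\<close> j(2) antimono_on_interval by (intro edge_slack_mono) auto
  moreover have "0 \<le> (\<Sum>(i, l)\<in>up_edges n A - {(1, j)}. edge_slack p a i l)"
    using assms antimono_on_interval
    by (intro sum_nonneg) (auto simp: up_edges_def intro!: edge_slack_nonneg)
  ultimately show ?thesis
    using tadpole3_energy_gap[OF j(1), of p] by linarith
qed

lemma up_edges_eq_tadpole3_if_subset:
  assumes subset: "up_edges n A \<subseteq> up_edges n (tadpole3 n)" and "0 < a 2"
  shows "up_edges n A = up_edges n (tadpole3 n)"
proof
  have tadpole_edge: "(i, l) = (1, 3) \<or> (l = Suc i \<and> 1 \<le> i \<and> i < n)"
    if "(i, l) \<in> up_edges n A" for i l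
    using that subset up_edges_tadpole3[of n] four_le by auto
  have edge: "(i, l) \<in> up_edges n A" if "A i l" "i < l" for i l
    using that edge_in_range[of i l] unfolding up_edges_def by auto
  have "1 \<in> {1..n}"
    using four_le by simp
  then obtain j\<^sub>1 j\<^sub>2 where j: "j\<^sub>1 \<noteq> j\<^sub>2" "A 1 j\<^sub>1" "A 1 j\<^sub>2"
    using two_neighbors_if_pos first_pos by metis
  have "j \<in> {2, 3}" if "A 1 j" for j
  proof -
    have "1 < j"
      using edge_irrefl[OF that] edge_in_range[OF that] by auto
    then show ?thesis
      using tadpole_edge[OF edge[OF that]] by auto
  qed
  then have "j\<^sub>1 \<in> {2, 3}" "j\<^sub>2 \<in> {2, 3}"
    using j by blast+
  then have "(1, 2) \<in> up_edges n A" "(1, 3) \<in> up_edges n A"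
    using j edge by auto
  moreover have "(2, 3) \<in> up_edges n A"
  proof -
    obtain m where "3 \<le> m" "A 2 m"
      using far_neighbor[of 2] assms(2) by blast
    then show ?thesis
      using tadpole_edge[of 2 m] edge[of 2 m] by auto
  qed
  moreover have "(k, Suc k) \<in> up_edges n A" if k: "3 \<le> k" "k < n" for k
  proof -
    obtain i l where "1 \<le> i" "i \<le> k" "k < l" "l \<le> n" "A i l"
      using crossing_edge[of k] k by auto
    then show ?thesis
      using tadpole_edge[of i l] edge[of i l] k by (auto simp: less_Suc_eq_le)
  qed
  ultimately have "(k, Suc k) \<in> up_edges n A" if "k \<in> {1..<n}" for k
    using that by (cases "k \<le> 2") (auto simp: le_Suc_eq numeral_eq_Suc)
  moreover have "3 \<le> n"
    using four_le by simp
  ultimately show "up_edges n (tadpole3 n) \<subseteq> up_edges n A"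
    unfolding up_edges_tadpole3[OF \<open>3 \<le> n\<close>] using \<open>(1, 3) \<in> up_edges n A\<close> by auto
qed (fact subset)

lemma admissible_tadpole3_labeling: "admissible {1..n} (tadpole3 n) a"
  using admissible_tadpole3[of n a] four_le last_eq_0 first_pos by simp

lemma rayleigh_tadpole3_le:
  assumes "1 \<le> p"
  shows "rayleigh {1..n} (tadpole3 n) p a \<le> rayleigh {1..n} A p a"
  unfolding rayleigh_def using p_energy_tadpole3_le[OF assms] p_norm_pow_pos[OF _ admissible]
  by (intro divide_right_mono) (auto intro: less_imp_le)

end

locale strictly_sorted_labeling = sorted_labeling +
  assumes strictly_decreasing: "\<And>k. 2 \<le> k \<Longrightarrow> k < n \<Longrightarrow> a (Suc k) < a k"
begin

lemma tail_less: "2 \<le> m \<Longrightarrow> m < l \<Longrightarrow> l \<le> n \<Longrightarrow> a l < a m"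
  using strictly_decreasing[of m] a_antimono[of "Suc m" l] by simp

lemma third_less_first: "a 3 < a 1"
  using tail_less[of 2 3] a_antimono[of 1 2] four_le by simp

lemma edge_slack_pos:
  assumes "1 < p" "(i, l) \<in> up_edges n A" "l \<noteq> Suc i" "(i, l) \<noteq> (1, 3)"
  shows "0 < edge_slack p a i l"
proof -
  have il: "1 \<le> i" "Suc i < l" "l \<le> n"
    using assms(2,3) unfolding up_edges_def by auto
  have "a (l - 1) < a i"
  proof (cases "i = 1")
    case True
    then have "3 \<le> l - 1"
      using assms(4) il by auto
    then have "a (l - 1) \<le> a 3"
      using a_antimono[of 3 "l - 1"] il by simp
    then show ?thesis
      using True third_less_first by simp
  next
    case False
    then show ?thesis
      using tail_less[of i "l - 1"] il by simp
  qed
  moreover have "a l < a (l - 1)"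
    using tail_less[of "l - 1" l] il by simp
  ultimately have "edge_slack p a i (l - 1) < edge_slack p a i l"
    using assms(1) il antimono_on_interval by (intro edge_slack_mono_strict) auto
  moreover have "0 \<le> edge_slack p a i (l - 1)"
    using assms(1) il antimono_on_interval by (intro edge_slack_nonneg) auto
  ultimately show ?thesis
    by simp
qed

text \<open>In the energy gap of \<open>tadpole3_energy_gap\<close> both terms are nonnegative; when the gap is
  zero, strict superadditivity rules out every edge other than the unit steps and the
  chord \<open>(1, 3)\<close>.\<close>

lemma up_edges_subset_tadpole3_if_energy_eq:
  assumes "1 < p" "p_energy {1..n} A p a = p_energy {1..n} (tadpole3 n) p a"
  shows "up_edges n A \<subseteq> up_edges n (tadpole3 n)"
proof -
  obtain j where "3 \<le> j" "A 1 j"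
    using far_neighbor[of 1] first_pos by blast
  then have j: "(1, j) \<in> up_edges n A" "j \<le> n"
    using edge_in_range[of 1 j] unfolding up_edges_def by auto
  have slack_nonneg: "0 \<le> edge_slack p a i l" if "(i, l) \<in> up_edges n A" for i l
    using assms(1) that antimono_on_interval by (intro edge_slack_nonneg) (auto simp: up_edges_def)
  then have "0 \<le> (\<Sum>(i, l)\<in>up_edges n A - {(1, j)}. edge_slack p a i l)"
    by (intro sum_nonneg) auto
  moreover have "edge_slack p a 1 3 \<le> edge_slack p a 1 j"
    using assms(1) \<open>3 \<le> j\<close> j(2) antimono_on_interval by (intro edge_slack_mono) auto
  ultimately have "edge_slack p a 1 j = edge_slack p a 1 3"
    and "(\<Sum>(i, l)\<in>up_edges n A - {(1, j)}. edge_slack p a i l) = 0"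
    using tadpole3_energy_gap[OF j(1), of p] assms(2) by linarith+
  then have "\<forall>e\<in>up_edges n A - {(1, j)}. edge_slack p a (fst e) (snd e) = 0"
    using slack_nonneg finite_up_edges by (subst (asm) sum_nonneg_eq_0_iff) (auto simp: split_def)
  moreover have "j = 3"
  proof (rule ccontr)
    assume "j \<noteq> 3"
    then have "edge_slack p a 1 3 < edge_slack p a 1 j"
      using assms(1) \<open>3 \<le> j\<close> j(2) third_less_first tail_less[of 3 j] antimono_on_interval
      by (intro edge_slack_mono_strict) auto
    then show False
      using \<open>edge_slack p a 1 j = edge_slack p a 1 3\<close> by simp
  qed
  ultimately have "l = Suc i" if "(i, l) \<in> up_edges n A" "(i, l) \<noteq> (1, 3)" for i l
    using edge_slack_pos[OF assms(1) that(1) _ that(2)] that by force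
  moreover have "3 \<le> n"
    using four_le by simp
  ultimately show ?thesis
    unfolding up_edges_tadpole3[OF \<open>3 \<le> n\<close>] by (force simp: up_edges_def)
qed

lemma adj_eq_tadpole3_if_energy_eq:
  assumes "1 < p" "p_energy {1..n} A p a = p_energy {1..n} (tadpole3 n) p a"
    and "i \<in> {1..n}" "j \<in> {1..n}"
  shows "A i j \<longleftrightarrow> tadpole3 n i j"
proof -
  have "0 < a 2"
    using tail_less[of 2 3] nonneg[of 3] four_le by simp
  moreover have "up_edges n A \<subseteq> up_edges n (tadpole3 n)"
    using assms(1,2) by (rule up_edges_subset_tadpole3_if_energy_eq)
  ultimately have "up_edges n A = up_edges n (tadpole3 n)"
    by (intro up_edges_eq_tadpole3_if_subset)
  moreover have "simple_graph {1..n} (tadpole3 n)"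
    by (rule simple_graph_tadpole) simp
  ultimately show ?thesis
    using adj_eq_if_up_edges_eq[OF simple] assms(3,4) by blast
qed

end

lemma (in sorted_labeling) adj_eq_tadpole3_if_minimal:
  assumes "1 < p"
    and "rayleigh {1..n} (tadpole3 n) p a = rayleigh {1..n} A p a"
    and "rayleigh {1..n} (tadpole3 n) p a = lambda1p {1..n} (tadpole3 n) p"
    and "i \<in> {1..n}" "j \<in> {1..n}"
  shows "A i j \<longleftrightarrow> tadpole3 n i j"
proof -
  have "a (Suc k) < a k" if "2 \<le> k" "k < n" for k
    using tadpole3_minimizer_strictly_decreasing[OF assms(1) four_le antimono last_eq_0 first_pos]
      lambda1p_le_rayleigh assms(3) that by metis
  then interpret strictly_sorted_labeling n A a
    by unfold_locales
  have "p_energy {1..n} A p a = p_energy {1..n} (tadpole3 n) p a"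
    using assms(2) p_norm_pow_pos[OF _ admissible, of p] unfolding rayleigh_def by simp
  then show ?thesis
    using adj_eq_tadpole3_if_energy_eq[OF assms(1)] assms(4,5) by blast
qed

lemma sorted_labeling_exists:
  assumes "simple_graph V E" "connected_graph V E" "boundary V E \<noteq> {}" "card V = n" "4 \<le> n"
    and "admissible V E h" "\<And>x. 0 \<le> h x"
  obtains \<sigma> where "bij_betw \<sigma> {1..n} V" "sorted_labeling n (pullback_adj {1..n} \<sigma> E) (h \<circ> \<sigma>)"
proof -
  have "finite V"
    using assms(1) unfolding simple_graph_def by simp
  then obtain \<sigma> where \<sigma>: "bij_betw \<sigma> {1..n} V" "antimono_on {1..n} (h \<circ> \<sigma>)"
    using nonincreasing_enumeration assms(4) by metis
  have adj: "pullback_adj {1..n} \<sigma> E i j \<longleftrightarrow> E (\<sigma> i) (\<sigma> j)" if "i \<in> {1..n}" "j \<in> {1..n}" for i j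
    using that unfolding pullback_adj_def by simp
  have "sorted_labeling n (pullback_adj {1..n} \<sigma> E) (h \<circ> \<sigma>)"
  proof
    show "simple_graph {1..n} (pullback_adj {1..n} \<sigma> E)"
      using assms(1) by (rule simple_graph_pullback) simp
    show "connected_graph {1..n} (pullback_adj {1..n} \<sigma> E)"
      using \<sigma>(1) assms(1,2) by (rule connected_graph_pullback)
    show "boundary {1..n} (pullback_adj {1..n} \<sigma> E) \<noteq> {}"
      using boundary_iso[of \<sigma> "{1..n}" V _ E, OF \<sigma>(1) adj] assms(3) by auto
    show "admissible {1..n} (pullback_adj {1..n} \<sigma> E) (h \<circ> \<sigma>)"
      using \<sigma>(1) adj assms(6) by (rule admissible_iso)
  qed (use assms(5,7) \<sigma>(2) in auto)
  then show ?thesis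
    using that \<sigma>(1) by blast
qed

lemma lambda1p_tadpole3_le_rayleigh:
  assumes "1 \<le> p" "simple_graph V E" "connected_graph V E" "boundary V E \<noteq> {}" "card V = n" "4 \<le> n"
    and "admissible V E f"
  shows "lambda1p {1..n} (tadpole3 n) p \<le> rayleigh V E p f"
proof -
  define h where "h x = \<bar>f x\<bar>" for x
  obtain \<sigma> where \<sigma>: "bij_betw \<sigma> {1..n} V"
    and labeling: "sorted_labeling n (pullback_adj {1..n} \<sigma> E) (h \<circ> \<sigma>)"
    using sorted_labeling_exists[OF assms(2-6), of h] admissible_abs[OF assms(7)]
    unfolding h_def by auto
  interpret L: sorted_labeling n "pullback_adj {1..n} \<sigma> E" "h \<circ> \<sigma>"
    by (rule labeling)
  have "lambda1p {1..n} (tadpole3 n) p \<le> rayleigh {1..n} (tadpole3 n) p (h \<circ> \<sigma>)"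
    by (rule lambda1p_le_rayleigh[OF L.admissible_tadpole3_labeling])
  also have "\<dots> \<le> rayleigh {1..n} (pullback_adj {1..n} \<sigma> E) p (h \<circ> \<sigma>)"
    by (rule L.rayleigh_tadpole3_le[OF assms(1)])
  also have "\<dots> = rayleigh V E p h"
    using \<sigma> by (rule rayleigh_iso) (simp add: pullback_adj_def)
  also have "\<dots> \<le> rayleigh V E p f"
    unfolding h_def using assms(1,2,7) by (intro rayleigh_abs_le) (auto simp: simple_graph_def)
  finally show ?thesis .
qed

lemma graph_iso_tadpole3_if_lambda1p_eq:
  assumes "1 < p" "simple_graph V E" "connected_graph V E" "boundary V E \<noteq> {}" "card V = n" "4 \<le> n"
    and eq: "lambda1p V E p = lambda1p {1..n} (tadpole3 n) p"
  shows "graph_iso V E {1..n} (tadpole3 n)"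
proof -
  have "finite V"
    using assms(2) unfolding simple_graph_def by simp
  obtain f\<^sub>0 where "admissible V E f\<^sub>0"
    using admissible_exists[OF assms(2,3)] assms(5,6) by auto
  moreover have "0 < p"
    using assms(1) by simp
  ultimately obtain f where f: "admissible V E f" "rayleigh V E p f = lambda1p V E p"
    using lambda1p_attained[OF \<open>finite V\<close>] by metis
  define h where "h x = \<bar>f x\<bar>" for x
  have "rayleigh V E p h = lambda1p V E p"
    using rayleigh_abs_le[OF \<open>finite V\<close> f(1), of p] lambda1p_le_rayleigh[OF admissible_abs[OF f(1)], of p]
      f(2) assms(1) unfolding h_def by linarith
  obtain \<sigma> where \<sigma>: "bij_betw \<sigma> {1..n} V"
    and labeling: "sorted_labeling n (pullback_adj {1..n} \<sigma> E) (h \<circ> \<sigma>)"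
    using sorted_labeling_exists[OF assms(2-6), of h] admissible_abs[OF f(1)]
    unfolding h_def by auto
  interpret L: sorted_labeling n "pullback_adj {1..n} \<sigma> E" "h \<circ> \<sigma>"
    by (rule labeling)
  let ?T = "tadpole3 n" and ?P = "pullback_adj {1..n} \<sigma> E" and ?a = "h \<circ> \<sigma>"
  have "rayleigh {1..n} ?P p ?a = rayleigh V E p h"
    using \<sigma> by (rule rayleigh_iso) (simp add: pullback_adj_def)
  then have "rayleigh {1..n} ?P p ?a = lambda1p {1..n} ?T p"
    using \<open>rayleigh V E p h = lambda1p V E p\<close> eq by simp
  moreover have "lambda1p {1..n} ?T p \<le> rayleigh {1..n} ?T p ?a"
    by (rule lambda1p_le_rayleigh[OF L.admissible_tadpole3_labeling])
  ultimately have "rayleigh {1..n} ?T p ?a = rayleigh {1..n} ?P p ?a"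
    and "rayleigh {1..n} ?T p ?a = lambda1p {1..n} ?T p"
    using L.rayleigh_tadpole3_le[of p] assms(1) by linarith+
  then have "?P i j \<longleftrightarrow> ?T i j" if "i \<in> {1..n}" "j \<in> {1..n}" for i j
    using L.adj_eq_tadpole3_if_minimal[OF assms(1)] that by blast
  then have "graph_iso {1..n} ?T V E"
    using \<sigma> unfolding graph_iso_def pullback_adj_def by auto
  then show ?thesis
    by (rule graph_iso_sym)
qed

theorem theorem1p2:
  fixes V :: "'a set" and E :: "'a \<Rightarrow> 'a \<Rightarrow> bool" and p :: real and n :: nat
  assumes "p > 1"
    and "simple_graph V E" and "connected_graph V E"
    and "card V = n" and "n \<ge> 4"
    and "boundary V E \<noteq> {}"
  shows "lambda1p V E p \<ge> lambda1p (tadpole_vertices n) (tadpole_adj n 3) p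
    \<and> (lambda1p V E p = lambda1p (tadpole_vertices n) (tadpole_adj n 3) p
         \<longleftrightarrow> graph_iso V E (tadpole_vertices n) (tadpole_adj n 3))"
proof -
  obtain f\<^sub>0 where "admissible V E f\<^sub>0"
    using admissible_exists[OF assms(2,3)] assms(4,5) by auto
  then have "lambda1p {1..n} (tadpole3 n) p \<le> lambda1p V E p"
    using lambda1p_tadpole3_le_rayleigh[of p V E n] assms by (intro lambda1p_greatest) auto
  moreover have "lambda1p V E p = lambda1p {1..n} (tadpole3 n) p \<longleftrightarrow> graph_iso V E {1..n} (tadpole3 n)"
    using graph_iso_tadpole3_if_lambda1p_eq[of p V E n] lambda1p_iso[of V E "{1..n}" "tadpole3 n" p] assms
    by blast
  ultimately show ?thesis
    unfolding tadpole_vertices_def by simp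
qed

end
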